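(* Let $n \geq 3$. If $Z : \mathcal{P}_o^n \to \mathcal{K}_o^n$ is an $\mathrm{SL}(n)$ covariant $L_\infty$ Minkowski valuation, then $$h_{Z(sT^d)}(\pm e_1) = s\,h_{ZT^d}(\pm e_1)$$ for $1 \leq d \leq n$ and $s>0$, and $$h_{ZT^1}(e_1) \leq \dots \leq h_{ZT^n}(e_1),\qquad h_{ZT^1}(-e_1) \leq \dots \leq h_{ZT^n}(-e_1).$$
   Context: $\mathcal{K}_o^n$ denotes the set of convex bodies in $\mathbb{R}^n$ containing the origin $o$, and $\mathcal{P}_o^n$ the set of convex polytopes in $\mathbb{R}^n$ containing the origin. $h_K$ is the support function of $K$. $e_1,\dots,e_n$ is the standard basis and $T^d=[o,e_1,\dots,e_d]$ (convex hull) for $1\le d\le n$. For $K,L\in\mathcal{K}_o^n$, $K+_\infty L$ is the convex body with support function $\max\{h_K,h_L\}$. $Z$ is an $L_\infty$ Minkowski valuation if $Z(K\cup L)+_\infty Z(K\cap L)=ZK+_\infty ZL$ whenever $K,L,K\cup L,K\cap L\in\mathcal{P}_o^n$; it is $\mathrm{SL}(n)$ covariant if $Z(\phi K)=\phi ZK$ for all $\phi\in\mathrm{SL}(n)$. *)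

theory Defs
  imports "HOL-Analysis.Analysis"
begin

text \<open>Euclidean space R^n is modelled as real^'n with 'n a finite type; n = CARD('n).
  The index type carries a well-order, used only to enumerate the standard basis
  e_1, ..., e_n (every finite type admits such an order).\<close>

definition support_fun :: "(real^'n) set \<Rightarrow> real^'n \<Rightarrow> real" where
  "support_fun K u = Sup ((\<lambda>x. x \<bullet> u) ` K)"

definition convex_bodies_o :: "(real^'n) set set" where
  "convex_bodies_o = {K. compact K \<and> convex K \<and> 0 \<in> K}"

definition polytopes_o :: "(real^'n) set set" where
  "polytopes_o = {P. polytope P \<and> 0 \<in> P}"

definition std_basis :: "nat \<Rightarrow> real^'n::{finite,wellorder}" where
  "std_basis k = axis (sorted_list_of_set (UNIV :: 'n set) ! (k - 1)) 1"

definition simplex_T :: "nat \<Rightarrow> (real^'n::{finite,wellorder}) set" where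
  "simplex_T d = convex hull (insert 0 {std_basis k | k. 1 \<le> k \<and> k \<le> d})"

text \<open>Z(K u L) +_inf Z(K n L) = ZK +_inf ZL, stated via support functions
  (K +_inf L is the convex body with support function max h_K h_L).\<close>
definition Linf_valuation :: "((real^'n) set \<Rightarrow> (real^'n) set) \<Rightarrow> bool" where
  "Linf_valuation Z \<longleftrightarrow>
     (\<forall>K L. K \<in> polytopes_o \<and> L \<in> polytopes_o \<and> K \<union> L \<in> polytopes_o \<and> K \<inter> L \<in> polytopes_o \<longrightarrow>
        (\<forall>u. max (support_fun (Z (K \<union> L)) u) (support_fun (Z (K \<inter> L)) u)
             = max (support_fun (Z K) u) (support_fun (Z L) u)))"

definition SL_covariant :: "((real^'n) set \<Rightarrow> (real^'n) set) \<Rightarrow> bool" where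
  "SL_covariant Z \<longleftrightarrow>
     (\<forall>A :: real^'n^'n. det A = 1 \<longrightarrow>
        (\<forall>P \<in> polytopes_o. Z ((\<lambda>x. A *v x) ` P) = (\<lambda>x. A *v x) ` Z P))"

end

theory Submission
  imports Defs
begin

text \<open>Write \<open>h(K, u)\<close> for the support function and let \<open>u = \<plusminus>e\<^sub>1\<close>. If \<open>\<phi> \<in> SL(n)\<close> acts on
  two coordinates other than the first and as \<open>\<mu>\<close> times the identity elsewhere, covariance gives
  \<open>h(Z(\<phi> P), u) = \<mu> h(Z P, u)\<close>. For \<open>d < n\<close> the dilation by \<open>s\<close> agrees on \<open>T\<^sup>d\<close> with such a
  map that compensates in the \<open>n\<close>-th coordinate, which gives homogeneity. The simplex
  \<open>T\<^sup>d\<^sup>+\<^sup>1\<close> and its mirror image in \<open>x\<^sub>d\<^sub>+\<^sub>1 = 0\<close>, an \<open>SL(n)\<close> image of it, form a convex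
  bipyramid and meet in \<open>T\<^sup>d\<close>, so the valuation property yields
  \<open>h(Z T\<^sup>d, u) \<le> h(Z T\<^sup>d\<^sup>+\<^sup>1, u)\<close>. Finally, a hyperplane through the face opposite to two
  vertices cuts \<open>s T\<^sup>n\<close> into two pieces, one of which is an \<open>SL(n)\<close> image of \<open>r T\<^sup>n\<close>, meeting in an
  \<open>SL(n)\<close> image of \<open>s T\<^sup>n\<^sup>-\<^sup>1\<close>; this shows that \<open>h(Z(s T\<^sup>n), u) / s\<close> is nondecreasing in \<open>s\<close> and
  invariant under a fixed dilation, hence constant.\<close>

lemma Sup_image_mult_left:
  fixes f :: "'a \<Rightarrow> real"
  assumes "K \<noteq> {}" "bdd_above (f ` K)" "c \<ge> 0"
  shows "Sup ((\<lambda>x. c * f x) ` K) = c * Sup (f ` K)"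
proof -
  have "mono ((*) c)" using assms(3) by (auto intro: monoI mult_left_mono)
  moreover have "continuous (at_left (Sup (f ` K))) ((*) c)"
    by (intro continuous_intros)
  ultimately have "c * Sup (f ` K) = Sup ((*) c ` f ` K)"
    using assms(1,2) by (intro continuous_at_Sup_mono) auto
  then show ?thesis by (simp add: image_image)
qed

lemma support_fun_scaleR:
  assumes "K \<noteq> {}" "bounded K" "c \<ge> 0"
  shows "support_fun K (c *\<^sub>R u) = c * support_fun K u"
proof -
  have "bdd_above ((\<lambda>x. x \<bullet> u) ` K)"
    using assms(2) by (intro bounded_imp_bdd_above bounded_linear_image) (auto intro: bounded_linear_inner_left)
  then show ?thesis
    unfolding support_fun_def inner_scaleR_right using Sup_image_mult_left[OF assms(1) _ assms(3)] by blast
qed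

lemma support_fun_matrix_image:
  "support_fun ((\<lambda>x. A *v x) ` K) u = support_fun K (transpose A *v u)"
  unfolding support_fun_def image_image
  by (simp add: dot_lmul_matrix[symmetric] inner_commute)

lemma image_eq_Collect_inverse:
  assumes "\<And>x. g (f x) = x" "\<And>y. f (g y) = y"
  shows "f ` S = {y. g y \<in> S}"
  using assms by (auto; metis image_eqI)

lemma polytopes_o_matrix_image:
  assumes "P \<in> polytopes_o"
  shows "(\<lambda>x. A *v x) ` P \<in> polytopes_o"
proof -
  have "polytope ((\<lambda>x. A *v x) ` P)"
    using assms by (intro polytope_linear_image) (auto simp: polytopes_o_def)
  moreover have "0 \<in> (\<lambda>x. A *v x) ` P"
    using assms by (auto simp: polytopes_o_def intro!: image_eqI[of 0 _ 0])
  ultimately show ?thesis by (simp add: polytopes_o_def)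
qed

lemma sum_UNIV_remove_two:
  fixes f :: "'n::finite \<Rightarrow> 'a::comm_monoid_add"
  assumes "a \<noteq> b"
  shows "sum f UNIV = f a + f b + sum f (UNIV - {a, b})"
proof -
  have "sum f UNIV = f a + sum f (UNIV - {a})" by (simp add: sum.remove)
  also have "sum f (UNIV - {a}) = f b + sum f (UNIV - {a} - {b})"
    using assms by (intro sum.remove) auto
  finally show ?thesis by (simp add: Diff_insert2[symmetric] insert_commute add.assoc)
qed

lemma prod_UNIV_remove_two:
  fixes f :: "'n::finite \<Rightarrow> 'a::comm_monoid_mult"
  assumes "a \<noteq> b"
  shows "prod f UNIV = f a * f b * prod f (UNIV - {a, b})"
proof -
  have "prod f UNIV = f a * prod f (UNIV - {a})" by (simp add: prod.remove)
  also have "prod f (UNIV - {a}) = f b * prod f (UNIV - {a} - {b})"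
    using assms by (intro prod.remove) auto
  finally show ?thesis by (simp add: Diff_insert2[symmetric] insert_commute mult.assoc)
qed

lemma sum_vec_change_two:
  fixes y z :: "real^'n::finite"
  assumes "a \<noteq> c" and "\<And>i. i \<noteq> a \<Longrightarrow> i \<noteq> c \<Longrightarrow> z$i = y$i"
  shows "sum (\<lambda>i. z$i) UNIV = sum (\<lambda>i. y$i) UNIV + (z$a - y$a) + (z$c - y$c)"
proof -
  have "sum (\<lambda>i. z$i) (UNIV - {a,c}) = sum (\<lambda>i. y$i) (UNIV - {a,c})"
    by (rule sum.cong) (use assms(2) in auto)
  then show ?thesis
    using sum_UNIV_remove_two[OF assms(1), of "\<lambda>i. z$i"] sum_UNIV_remove_two[OF assms(1), of "\<lambda>i. y$i"]
    by simp
qed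

lemma mono_dilation_invariant_const:
  fixes G :: "real \<Rightarrow> real"
  assumes q: "0 < q" "q < 1"
    and mono: "\<And>r s. 0 < r \<Longrightarrow> r < s \<Longrightarrow> G r \<le> G s"
    and dilation: "\<And>s. 0 < s \<Longrightarrow> G (s * q) = G s"
    and "0 < s" "0 < t"
  shows "G s = G t"
proof -
  have le: "G s \<le> G t" if st: "0 < s" "0 < t" for s t
  proof -
    have iter: "G (s * q ^ k) = G s" for k
    proof (induction k)
      case (Suc k)
      have "G (s * q ^ Suc k) = G (s * q ^ k * q)" by (simp only: power_Suc2 mult.assoc)
      also have "\<dots> = G s" using dilation[of "s * q ^ k"] Suc.IH st q by simp
      finally show ?case .
    qed simp
    obtain k where "q ^ k < t / s" using real_arch_pow_inv[of "t / s" q] st q by auto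
    then have "s * q ^ k < t" using st by (simp add: field_simps)
    then have "G (s * q ^ k) \<le> G t" using mono st q by simp
    then show ?thesis using iter by simp
  qed
  show ?thesis using le[of s t] le[of t s] assms(5,6) by simp
qed

subsection \<open>Coordinate simplices\<close>

definition coord_index :: "nat \<Rightarrow> 'n::{finite,wellorder}" where
  "coord_index k = sorted_list_of_set (UNIV::'n set) ! (k - 1)"

definition first_coords :: "nat \<Rightarrow> 'n::{finite,wellorder} set" where
  "first_coords d = {coord_index k | k. 1 \<le> k \<and> k \<le> d}"

definition coord_simplex :: "'n set \<Rightarrow> real \<Rightarrow> (real^'n) set" where
  "coord_simplex R s =
     {x. (\<forall>i. 0 \<le> x$i) \<and> (\<forall>i. i \<notin> R \<longrightarrow> x$i = 0) \<and> sum (\<lambda>i. x$i) UNIV \<le> s}"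

lemma std_basis_eq_axis: "std_basis k = axis (coord_index k) 1"
  by (simp add: std_basis_def coord_index_def)

lemma coord_index_eq_iff:
  assumes "1 \<le> k" "k \<le> CARD('n)" "1 \<le> l" "l \<le> CARD('n)"
  shows "(coord_index k :: 'n::{finite,wellorder}) = coord_index l \<longleftrightarrow> k = l"
proof -
  let ?xs = "sorted_list_of_set (UNIV::'n set)"
  have "?xs ! (k - 1) = ?xs ! (l - 1) \<longleftrightarrow> k - 1 = l - 1"
    using assms by (intro nth_eq_iff_index_eq) auto
  then show ?thesis using assms unfolding coord_index_def by auto
qed

lemma coord_index_surj:
  fixes i :: "'n::{finite,wellorder}"
  obtains k where "1 \<le> k" "k \<le> CARD('n)" "i = coord_index k"
proof -
  let ?xs = "sorted_list_of_set (UNIV::'n set)"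
  have "i \<in> set ?xs" by auto
  then obtain j where "j < length ?xs" "?xs ! j = i" by (metis in_set_conv_nth)
  then show ?thesis by (intro that[of "Suc j"]) (auto simp: coord_index_def)
qed

lemma coord_index_in_first_coords_iff:
  assumes "1 \<le> k" "k \<le> CARD('n)" "d \<le> CARD('n)"
  shows "(coord_index k :: 'n::{finite,wellorder}) \<in> first_coords d \<longleftrightarrow> k \<le> d"
proof
  assume "(coord_index k :: 'n) \<in> first_coords d"
  then obtain l where "1 \<le> l" "l \<le> d" "(coord_index k :: 'n) = coord_index l"
    by (auto simp: first_coords_def)
  then show "k \<le> d" using assms coord_index_eq_iff[where 'n='n, of k l] by auto
qed (use assms in \<open>auto simp: first_coords_def\<close>)

lemma first_coords_CARD: "first_coords CARD('n) = (UNIV :: 'n::{finite,wellorder} set)"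
proof -
  have "i \<in> first_coords CARD('n)" for i :: 'n
    by (rule coord_index_surj[of i]) (auto simp: first_coords_def)
  then show ?thesis by auto
qed

lemma first_coords_Suc: "first_coords (Suc d) = insert (coord_index (Suc d)) (first_coords d)"
  unfolding first_coords_def by (auto simp: le_Suc_eq)

lemma convex_hull_axis_eq_coord_simplex:
  "convex hull (insert 0 ((\<lambda>i. axis i 1) ` R)) = coord_simplex (R :: 'n::finite set) 1"
proof -
  have sub: "(\<lambda>i. axis i (1::real)) ` R \<subseteq> Basis" by auto
  have inj: "inj_on (\<lambda>i::'n. axis i (1::real)) R" by (auto simp: inj_on_def axis_eq_axis)
  have "(\<forall>j\<in>Basis. 0 \<le> x \<bullet> j) \<longleftrightarrow> (\<forall>i. 0 \<le> x$i)"
    and "(\<forall>j\<in>Basis. j \<notin> (\<lambda>i. axis i 1) ` R \<longrightarrow> x \<bullet> j = 0) \<longleftrightarrow> (\<forall>i. i \<notin> R \<longrightarrow> x$i = 0)"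
    and "(\<Sum>j\<in>(\<lambda>i. axis i 1) ` R. x \<bullet> j) = sum (\<lambda>i. x$i) R" for x :: "real^'n"
    by (auto simp: Basis_vec_def inner_axis axis_eq_axis sum.reindex[OF inj])
  moreover have "sum (\<lambda>i. x$i) UNIV = sum (\<lambda>i. x$i) R" if "\<forall>i. i \<notin> R \<longrightarrow> x$i = 0" for x :: "real^'n"
    by (rule sum.mono_neutral_right) (use that in auto)
  ultimately show ?thesis
    unfolding substd_simplex[OF sub] coord_simplex_def by auto
qed

lemma simplex_T_eq_coord_simplex:
  "(simplex_T d :: (real^'n::{finite,wellorder}) set) = coord_simplex (first_coords d) 1"
proof -
  have "{std_basis k | k. 1 \<le> k \<and> k \<le> d} = (\<lambda>i. axis i 1) ` (first_coords d :: 'n set)"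
    unfolding first_coords_def std_basis_eq_axis by auto
  then show ?thesis
    unfolding simplex_T_def by (simp only: convex_hull_axis_eq_coord_simplex)
qed

lemma coord_simplex_scaleR:
  assumes "c > 0"
  shows "(\<lambda>x. c *\<^sub>R x) ` coord_simplex R r = coord_simplex R (c * r)"
proof -
  have "(\<lambda>x. c *\<^sub>R x) ` coord_simplex R r = {y. (1/c) *\<^sub>R y \<in> coord_simplex R r}"
    by (rule image_eq_Collect_inverse) (use assms in auto)
  also have "\<dots> = coord_simplex R (c * r)"
    using assms by (auto simp: coord_simplex_def zero_le_divide_iff sum_divide_distrib[symmetric]
      divide_le_eq mult.commute)
  finally show ?thesis .
qed

lemma coord_simplex_polytopes_o:
  assumes "s > 0"
  shows "coord_simplex (R :: 'n::finite set) s \<in> polytopes_o"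
proof -
  have "polytope (convex hull (insert 0 ((\<lambda>i. axis i (1::real)) ` R)))"
    by (rule polytope_convex_hull) simp
  then have "polytope ((\<lambda>x. s *\<^sub>R x) ` coord_simplex R 1)"
    unfolding convex_hull_axis_eq_coord_simplex by (intro polytope_linear_image) (auto intro: linear_scaleR)
  then have "polytope (coord_simplex R s)"
    using coord_simplex_scaleR[OF assms, of R 1] by simp
  then show ?thesis
    using assms by (simp add: polytopes_o_def coord_simplex_def)
qed

subsection \<open>Matrices acting on two coordinates\<close>

definition block_matrix :: "'n::finite \<Rightarrow> 'n \<Rightarrow> real \<Rightarrow> real \<Rightarrow> real \<Rightarrow> real \<Rightarrow> real \<Rightarrow> real^'n^'n" where
  "block_matrix a b \<mu> \<alpha> \<beta> \<gamma> \<delta> = (\<chi> i j.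
     if i = a then (if j = a then \<alpha> else if j = b then \<beta> else 0)
     else if i = b then (if j = a then \<gamma> else if j = b then \<delta> else 0)
     else if i = j then \<mu> else 0)"

lemma block_matrix_mult_vec:
  assumes "a \<noteq> b"
  shows "(block_matrix a b \<mu> \<alpha> \<beta> \<gamma> \<delta> *v x) $ i =
    (if i = a then \<alpha> * x$a + \<beta> * x$b else if i = b then \<gamma> * x$a + \<delta> * x$b else \<mu> * x$i)"
proof -
  let ?M = "block_matrix a b \<mu> \<alpha> \<beta> \<gamma> \<delta>"
  have row: "(?M *v x) $ i = sum (\<lambda>j. ?M$i$j * x$j) UNIV"
    by (simp add: matrix_vector_mult_def)
  show ?thesis
  proof (cases "i = a \<or> i = b")
    case True
    have "sum (\<lambda>j. ?M$i$j * x$j) (UNIV - {a, b}) = 0"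
      using True by (intro sum.neutral) (auto simp: block_matrix_def)
    then show ?thesis
      unfolding row sum_UNIV_remove_two[OF assms] using True assms by (auto simp: block_matrix_def)
  next
    case False
    have "sum (\<lambda>j. ?M$i$j * x$j) UNIV = sum (\<lambda>j. if j = i then \<mu> * x$i else 0) UNIV"
      using False by (intro sum.cong) (auto simp: block_matrix_def)
    then show ?thesis unfolding row using False by simp
  qed
qed

lemma transpose_block_matrix_mult_vec:
  assumes "a \<noteq> b" "u$a = 0" "u$b = 0"
  shows "Finite_Cartesian_Product.transpose (block_matrix a b \<mu> \<alpha> \<beta> \<gamma> \<delta>) *v u = \<mu> *\<^sub>R u"
proof -
  have "(Finite_Cartesian_Product.transpose (block_matrix a b \<mu> \<alpha> \<beta> \<gamma> \<delta>) *v u) $ j = \<mu> * u$j" for j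
  proof -
    have "(Finite_Cartesian_Product.transpose (block_matrix a b \<mu> \<alpha> \<beta> \<gamma> \<delta>) *v u) $ j
        = sum (\<lambda>i. (block_matrix a b \<mu> \<alpha> \<beta> \<gamma> \<delta>)$i$j * u$i) UNIV"
      by (simp add: matrix_vector_mult_def Finite_Cartesian_Product.transpose_def)
    also have "\<dots> = sum (\<lambda>i. if i = j then \<mu> * u$j else 0) UNIV"
      using assms by (intro sum.cong) (auto simp: block_matrix_def)
    finally show ?thesis by simp
  qed
  then show ?thesis by (simp add: vec_eq_iff)
qed

lemma block_matrix_offdiag:
  "i \<noteq> j \<Longrightarrow> (block_matrix a b \<mu> \<alpha> \<beta> \<gamma> \<delta>)$i$j =
     (if i = a \<and> j = b then \<beta> else if i = b \<and> j = a then \<gamma> else 0)"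
  unfolding block_matrix_def vec_lambda_beta
  by (cases "i = a"; cases "i = b"; cases "j = a"; cases "j = b") simp_all

lemma prod_diag_block_matrix:
  assumes "a \<noteq> (b::'n::finite)"
  shows "prod (\<lambda>i. (block_matrix a b \<mu> \<alpha> \<beta> \<gamma> \<delta>)$i$i) UNIV = \<alpha> * \<delta> * \<mu> ^ (CARD('n) - 2)"
proof -
  have "prod (\<lambda>i. (block_matrix a b \<mu> \<alpha> \<beta> \<gamma> \<delta>)$i$i) (UNIV - {a, b}) = prod (\<lambda>i. \<mu>) (UNIV - {a, b})"
    by (intro prod.cong) (auto simp: block_matrix_def)
  also have "\<dots> = \<mu> ^ (CARD('n) - 2)"
    using assms by (simp add: card_Diff_subset numeral_2_eq_2)
  finally show ?thesis
    using assms by (simp add: prod_UNIV_remove_two[OF assms] block_matrix_def)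
qed

lemma det_block_matrix_triangular:
  assumes "a \<noteq> (b::'n::{finite,wellorder})" "\<beta> = 0 \<or> \<gamma> = 0"
  shows "det (block_matrix a b \<mu> \<alpha> \<beta> \<gamma> \<delta>) = \<alpha> * \<delta> * \<mu> ^ (CARD('n) - 2)"
proof -
  let ?M = "block_matrix a b \<mu> \<alpha> \<beta> \<gamma> \<delta>"
  have "det ?M = prod (\<lambda>i. ?M$i$i) UNIV"
  proof (cases "a < b \<and> \<beta> = 0 \<or> b < a \<and> \<gamma> = 0")
    case True
    show ?thesis
      by (rule det_lowerdiagonal) (use True in \<open>auto simp: block_matrix_offdiag\<close>)
  next
    case False
    then have "a < b \<and> \<gamma> = 0 \<or> b < a \<and> \<beta> = 0"
      using assms by (meson linorder_neqE)
    then show ?thesis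
      by (intro det_upperdiagonal) (auto simp: block_matrix_offdiag)
  qed
  then show ?thesis using prod_diag_block_matrix[OF assms(1)] by simp
qed

lemma det_block_matrix_rotation:
  assumes "a \<noteq> (b::'n::{finite,wellorder})"
  shows "det (block_matrix a b 1 0 1 (-1) 0) = 1"
proof -
  let ?D = "block_matrix a b 1 (-1) 0 0 1"
  let ?p = "Transposition.transpose a b"
  have "block_matrix a b 1 0 1 (-1) 0 = (\<chi> i. ?D $ ?p i)"
    using assms by (auto simp: vec_eq_iff block_matrix_def Transposition.transpose_def)
  moreover have "det (\<chi> i. ?D $ ?p i) = of_int (sign ?p) * det ?D"
    by (rule det_permute_rows) (rule permutes_swap_id, auto)
  moreover have "det ?D = -1"
    using det_block_matrix_triangular[OF assms, of 0 0 1 "-1" 1] by simp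
  ultimately show ?thesis using assms by (simp add: sign_swap_id)
qed

subsection \<open>The bipyramid over a coordinate simplex\<close>

text \<open>The mirror image of \<open>coord_simplex R s\<close> under \<open>x\<^sub>c \<mapsto> -x\<^sub>c\<close>.\<close>

definition reflected_simplex :: "'n::finite set \<Rightarrow> 'n \<Rightarrow> real \<Rightarrow> (real^'n) set" where
  "reflected_simplex R c s = {y. (\<forall>i. i \<noteq> c \<longrightarrow> 0 \<le> y$i) \<and> y$c \<le> 0 \<and> (\<forall>i. i \<notin> R \<longrightarrow> y$i = 0)
      \<and> sum (\<lambda>i. y$i) UNIV - 2 * y$c \<le> s}"

definition bipyramid :: "'n::finite set \<Rightarrow> 'n \<Rightarrow> real \<Rightarrow> (real^'n) set" where
  "bipyramid R c s = {y. (\<forall>i. i \<noteq> c \<longrightarrow> 0 \<le> y$i) \<and> (\<forall>i. i \<notin> R \<longrightarrow> y$i = 0)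
      \<and> sum (\<lambda>i. y$i) UNIV \<le> s \<and> sum (\<lambda>i. y$i) UNIV - 2 * y$c \<le> s}"

lemma rotation_image_coord_simplex:
  fixes R :: "'n::finite set"
  assumes ne: "a \<noteq> c" and aR: "a \<in> R" and cR: "c \<in> R"
  shows "(\<lambda>x. block_matrix a c 1 0 1 (-1) 0 *v x) ` coord_simplex R s = reflected_simplex R c s"
proof -
  let ?G = "block_matrix a c 1 0 (-1) 1 0"
  have "(\<lambda>x. block_matrix a c 1 0 1 (-1) 0 *v x) ` coord_simplex R s = {y. ?G *v y \<in> coord_simplex R s}"
    by (rule image_eq_Collect_inverse) (use ne in \<open>simp_all add: vec_eq_iff block_matrix_mult_vec[OF ne]\<close>)
  also have "\<dots> = reflected_simplex R c s"
  proof (intro set_eqI)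
    fix y :: "real^'n"
    have g: "(?G *v y)$i = (if i = a then - y$c else if i = c then y$a else y$i)" for i
      by (simp add: block_matrix_mult_vec[OF ne])
    have sm: "sum (\<lambda>i. (?G *v y)$i) UNIV = sum (\<lambda>i. y$i) UNIV - 2 * y$c"
      using sum_vec_change_two[OF ne, of "?G *v y" y] g ne by simp
    have p: "(\<forall>i. 0 \<le> (?G *v y)$i) \<longleftrightarrow> (\<forall>i. i \<noteq> c \<longrightarrow> 0 \<le> y$i) \<and> y$c \<le> 0"
    proof
      assume H: "\<forall>i. 0 \<le> (?G *v y)$i"
      have "0 \<le> (?G *v y)$a" "0 \<le> (?G *v y)$c" "\<And>i. 0 \<le> (?G *v y)$i" using H by auto
      then show "(\<forall>i. i \<noteq> c \<longrightarrow> 0 \<le> y$i) \<and> y$c \<le> 0" unfolding g using ne by (metis neg_0_le_iff_le)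
    next
      assume "(\<forall>i. i \<noteq> c \<longrightarrow> 0 \<le> y$i) \<and> y$c \<le> 0"
      then show "\<forall>i. 0 \<le> (?G *v y)$i" unfolding g using ne by auto
    qed
    have z: "(\<forall>i. i \<notin> R \<longrightarrow> (?G *v y)$i = 0) \<longleftrightarrow> (\<forall>i. i \<notin> R \<longrightarrow> y$i = 0)"
      unfolding g using aR cR by auto
    show "y \<in> {y. ?G *v y \<in> coord_simplex R s} \<longleftrightarrow> y \<in> reflected_simplex R c s"
      unfolding coord_simplex_def reflected_simplex_def mem_Collect_eq sm p z by blast
  qed
  finally show ?thesis .
qed

lemma reflection_image_coord_simplex:
  fixes R :: "'n::finite set"
  assumes ne: "a \<noteq> c" and aR: "a \<notin> R" and cR: "c \<in> R"
  shows "(\<lambda>x. block_matrix a c 1 (-1) 0 0 (-1) *v x) ` coord_simplex R s = reflected_simplex R c s"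
proof -
  let ?G = "block_matrix a c 1 (-1) 0 0 (-1)"
  have "(\<lambda>x. ?G *v x) ` coord_simplex R s = {y. ?G *v y \<in> coord_simplex R s}"
    by (rule image_eq_Collect_inverse) (simp_all add: vec_eq_iff block_matrix_mult_vec[OF ne])
  also have "\<dots> = reflected_simplex R c s"
  proof (intro set_eqI)
    fix y :: "real^'n"
    have g: "(?G *v y)$i = (if i = a then - y$a else if i = c then - y$c else y$i)" for i
      by (simp add: block_matrix_mult_vec[OF ne])
    have sm: "sum (\<lambda>i. (?G *v y)$i) UNIV = sum (\<lambda>i. y$i) UNIV - 2 * y$a - 2 * y$c"
      using sum_vec_change_two[OF ne, of "?G *v y" y] g ne by simp
    show "y \<in> {y. ?G *v y \<in> coord_simplex R s} \<longleftrightarrow> y \<in> reflected_simplex R c s"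
    proof
      assume "y \<in> {y. ?G *v y \<in> coord_simplex R s}"
      then have H: "\<forall>i. 0 \<le> (?G *v y)$i" "\<forall>i. i \<notin> R \<longrightarrow> (?G *v y)$i = 0"
        "sum (\<lambda>i. (?G *v y)$i) UNIV \<le> s" by (auto simp: coord_simplex_def)
      have ya: "y$a = 0" using spec[OF H(2), of a] aR unfolding g by simp
      have yc: "y$c \<le> 0" using spec[OF H(1), of c] ne unfolding g by simp
      have "\<forall>i. i \<noteq> c \<longrightarrow> 0 \<le> y$i"
      proof (intro allI impI)
        fix i assume "i \<noteq> c"
        then show "0 \<le> y$i" using spec[OF H(1), of i] ya unfolding g by (cases "i = a") auto
      qed
      moreover have "\<forall>i. i \<notin> R \<longrightarrow> y$i = 0"
      proof (intro allI impI)
        fix i assume "i \<notin> R"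
        then show "y$i = 0" using spec[OF H(2), of i] ya cR unfolding g by (cases "i = a"; cases "i = c") auto
      qed
      ultimately show "y \<in> reflected_simplex R c s" using ya yc H(3) sm by (simp add: reflected_simplex_def)
    next
      assume "y \<in> reflected_simplex R c s"
      then have L: "\<forall>i. i \<noteq> c \<longrightarrow> 0 \<le> y$i" "y$c \<le> 0" "\<forall>i. i \<notin> R \<longrightarrow> y$i = 0"
        "sum (\<lambda>i. y$i) UNIV - 2 * y$c \<le> s" by (auto simp: reflected_simplex_def)
      have ya: "y$a = 0" using L(3) aR by simp
      have "\<forall>i. 0 \<le> (?G *v y)$i" using L(1,2) ya unfolding g by auto
      moreover have "\<forall>i. i \<notin> R \<longrightarrow> (?G *v y)$i = 0" using L(3) ya cR unfolding g by auto
      ultimately show "y \<in> {y. ?G *v y \<in> coord_simplex R s}" using L(4) ya sm by (simp add: coord_simplex_def)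
    qed
  qed
  finally show ?thesis .
qed

lemma coord_simplex_inter_reflected:
  assumes cR: "c \<notin> R0"
  shows "coord_simplex (insert c R0) s \<inter> reflected_simplex (insert c R0) c s = coord_simplex R0 s"
proof (intro set_eqI iffI)
  fix y assume "y \<in> coord_simplex (insert c R0) s \<inter> reflected_simplex (insert c R0) c s"
  then have H: "\<forall>i. 0 \<le> y$i" "\<forall>i. i \<notin> insert c R0 \<longrightarrow> y$i = 0" "sum (\<lambda>i. y$i) UNIV \<le> s"
    "y$c \<le> 0" unfolding coord_simplex_def reflected_simplex_def by auto
  have "y$c = 0" using H(1,4) by (meson order_antisym)
  then have "\<forall>i. i \<notin> R0 \<longrightarrow> y$i = 0" using H(2) by (metis insertE)
  then show "y \<in> coord_simplex R0 s" using H unfolding coord_simplex_def by blast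
next
  fix y assume "y \<in> coord_simplex R0 s"
  then have H: "\<forall>i. 0 \<le> y$i" "\<forall>i. i \<notin> R0 \<longrightarrow> y$i = 0" "sum (\<lambda>i. y$i) UNIV \<le> s"
    unfolding coord_simplex_def by auto
  have yc: "y$c = 0" using H(2) cR by blast
  have "y \<in> coord_simplex (insert c R0) s" using H unfolding coord_simplex_def by blast
  moreover have "y \<in> reflected_simplex (insert c R0) c s" using H yc unfolding reflected_simplex_def by auto
  ultimately show "y \<in> coord_simplex (insert c R0) s \<inter> reflected_simplex (insert c R0) c s" by blast
qed

lemma coord_simplex_union_reflected:
  "coord_simplex R s \<union> reflected_simplex R c s = bipyramid R c s"
proof (intro set_eqI iffI)
  fix y assume "y \<in> coord_simplex R s \<union> reflected_simplex R c s"
  then show "y \<in> bipyramid R c s"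
  proof
    assume "y \<in> coord_simplex R s"
    then have H: "\<forall>i. 0 \<le> y$i" "\<forall>i. i \<notin> R \<longrightarrow> y$i = 0" "sum (\<lambda>i. y$i) UNIV \<le> s"
      unfolding coord_simplex_def by auto
    have "0 \<le> y$c" using H(1) by blast
    then have "sum (\<lambda>i. y$i) UNIV - 2 * y$c \<le> s" using H(3) by linarith
    then show ?thesis using H unfolding bipyramid_def by blast
  next
    assume "y \<in> reflected_simplex R c s"
    then have H: "\<forall>i. i \<noteq> c \<longrightarrow> 0 \<le> y$i" "y$c \<le> 0" "\<forall>i. i \<notin> R \<longrightarrow> y$i = 0"
      "sum (\<lambda>i. y$i) UNIV - 2 * y$c \<le> s" unfolding reflected_simplex_def by auto
    then have "sum (\<lambda>i. y$i) UNIV \<le> s" by linarith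
    then show ?thesis using H unfolding bipyramid_def by blast
  qed
next
  fix y assume "y \<in> bipyramid R c s"
  then have H: "\<forall>i. i \<noteq> c \<longrightarrow> 0 \<le> y$i" "\<forall>i. i \<notin> R \<longrightarrow> y$i = 0"
      "sum (\<lambda>i. y$i) UNIV \<le> s" "sum (\<lambda>i. y$i) UNIV - 2 * y$c \<le> s" unfolding bipyramid_def by auto
  show "y \<in> coord_simplex R s \<union> reflected_simplex R c s"
  proof (cases "y$c \<ge> 0")
    case True
    then have "\<forall>i. 0 \<le> y$i" using H(1) by metis
    then show ?thesis using H unfolding coord_simplex_def by blast
  next
    case False
    then have "y$c \<le> 0" by linarith
    then show ?thesis using H unfolding reflected_simplex_def by blast
  qed
qed

lemma polyhedron_bipyramid: "polyhedron (bipyramid (R :: 'n::finite set) c s)"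
proof -
  let ?w = "(\<chi> i. if i = c then -1 else 1) :: real^'n"
  have "(\<chi> i. 1) \<bullet> y = sum (\<lambda>i. y$i) UNIV" for y :: "real^'n"
    by (simp add: inner_vec_def)
  moreover have "?w \<bullet> y = sum (\<lambda>i. y$i) UNIV - 2 * y$c" for y :: "real^'n"
  proof -
    have "?w \<bullet> y = sum (\<lambda>i. y$i - (if i = c then 2 * y$i else 0)) UNIV"
      unfolding inner_vec_def by (intro sum.cong) auto
    then show ?thesis by (simp add: sum_subtractf)
  qed
  ultimately have "bipyramid R c s =
      (\<Inter>i\<in>-{c}. {y. axis i 1 \<bullet> y \<ge> 0}) \<inter> (\<Inter>i\<in>-R. {y. axis i 1 \<bullet> y = 0}) \<inter>
      {y. (\<chi> i. 1) \<bullet> y \<le> s} \<inter> {y. ?w \<bullet> y \<le> s}"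
    by (auto simp: bipyramid_def inner_axis')
  moreover have "polyhedron \<dots>"
    by (intro polyhedron_Int polyhedron_Inter polyhedron_halfspace_le)
      (auto intro: polyhedron_halfspace_ge polyhedron_hyperplane)
  ultimately show ?thesis by simp
qed

lemma bounded_bipyramid: "bounded (bipyramid R c s)"
proof -
  have "norm y \<le> \<bar>s\<bar>" if "y \<in> bipyramid R c s" for y
  proof -
    have "sum (\<lambda>i. \<bar>y$i\<bar>) UNIV = sum (\<lambda>i. y$i + (if i = c then \<bar>y$c\<bar> - y$c else 0)) UNIV"
      using that unfolding bipyramid_def by (intro sum.cong) auto
    also have "\<dots> = sum (\<lambda>i. y$i) UNIV + (\<bar>y$c\<bar> - y$c)"
      by (simp add: sum.distrib)
    also have "\<dots> \<le> s" using that unfolding bipyramid_def by auto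
    finally show ?thesis using norm_le_l1_cart[of y] by linarith
  qed
  then show ?thesis unfolding bounded_iff by blast
qed

lemma polytope_bipyramid: "polytope (bipyramid R c s)"
  by (simp add: polytope_eq_bounded_polyhedron polyhedron_bipyramid bounded_bipyramid)

subsection \<open>Cutting a coordinate simplex by a hyperplane\<close>

definition simplex_cut :: "'n::finite \<Rightarrow> 'n \<Rightarrow> real \<Rightarrow> real \<Rightarrow> (real^'n) set" where
  "simplex_cut a b l s = {y \<in> coord_simplex UNIV s. l * y$b \<le> (1 - l) * y$a}"

lemma simplex_cut_union: "simplex_cut a b l s \<union> simplex_cut b a (1 - l) s = coord_simplex UNIV s"
  unfolding simplex_cut_def by auto

lemma shear_image_coord_simplex:
  fixes a b :: "'n::finite"
  assumes ne: "a \<noteq> b" and l: "0 \<le> l" "l < 1"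
  shows "(\<lambda>x. block_matrix a b 1 1 l 0 (1 - l) *v x) ` coord_simplex UNIV s = simplex_cut a b l s"
proof -
  let ?G = "block_matrix a b 1 1 (- l / (1 - l)) 0 (1 / (1 - l))"
  have "(\<lambda>x. block_matrix a b 1 1 l 0 (1 - l) *v x) ` coord_simplex UNIV s = {y. ?G *v y \<in> coord_simplex UNIV s}"
    by (rule image_eq_Collect_inverse) (use ne l in \<open>simp_all add: vec_eq_iff block_matrix_mult_vec[OF ne]\<close>)
  also have "\<dots> = simplex_cut a b l s"
  proof (intro set_eqI)
    fix y :: "real^'n"
    have gi: "\<And>i. i \<noteq> a \<Longrightarrow> i \<noteq> b \<Longrightarrow> (?G *v y)$i = y$i"
      and ga: "(?G *v y)$a = y$a - l * y$b / (1 - l)"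
      and gb: "(?G *v y)$b = y$b / (1 - l)"
      using ne by (simp_all add: block_matrix_mult_vec[OF ne])
    have "y$b / (1 - l) = y$b + l * y$b / (1 - l)"
      using l by (simp add: field_simps)
    then have "sum (\<lambda>i. (?G *v y)$i) UNIV = sum (\<lambda>i. y$i) UNIV"
      using sum_vec_change_two[OF ne gi] unfolding ga gb by simp
    moreover have "(\<forall>i. 0 \<le> (?G *v y)$i) \<longleftrightarrow> (\<forall>i. 0 \<le> y$i) \<and> l * y$b \<le> (1 - l) * y$a"
    proof -
      have ha: "0 \<le> (?G *v y)$a \<longleftrightarrow> l * y$b \<le> (1 - l) * y$a"
        unfolding ga using l by (simp add: field_simps)
      have hb: "0 \<le> (?G *v y)$b \<longleftrightarrow> 0 \<le> y$b"
        unfolding gb using l by (simp add: zero_le_divide_iff)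
      have "0 \<le> y$a" if "0 \<le> y$b" "l * y$b \<le> (1 - l) * y$a"
        using that l by (smt (verit) mult_nonneg_nonneg zero_le_mult_iff)
      then show ?thesis using ha hb gi by metis
    qed
    ultimately show "y \<in> {y. ?G *v y \<in> coord_simplex UNIV s} \<longleftrightarrow> y \<in> simplex_cut a b l s"
      unfolding simplex_cut_def coord_simplex_def by auto
  qed
  finally show ?thesis .
qed

lemma simplex_cut_inter:
  fixes a b :: "'n::finite"
  assumes ne: "a \<noteq> b" and l: "0 \<le> l" "l < 1"
  shows "simplex_cut a b l s \<inter> simplex_cut b a (1 - l) s
    = (\<lambda>x. block_matrix a b 1 (1 / (1 - l)) l 0 (1 - l) *v x) ` coord_simplex (UNIV - {a}) s"
proof -
  let ?S = "\<lambda>x. block_matrix a b 1 1 l 0 (1 - l) *v x"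
  have "?S x \<in> simplex_cut b a (1 - l) s \<longleftrightarrow> x$a = 0"
    if "x \<in> coord_simplex UNIV s" for x
  proof -
    have "?S x \<in> coord_simplex UNIV s"
      using that shear_image_coord_simplex[OF ne l] by (auto simp: simplex_cut_def)
    moreover have "(1 - l) * (?S x)$a \<le> l * (?S x)$b \<longleftrightarrow> (1 - l) * x$a \<le> 0"
      using ne by (simp add: block_matrix_mult_vec[OF ne] algebra_simps)
    moreover have "0 \<le> x$a" using that by (simp add: coord_simplex_def)
    ultimately show ?thesis
      using l by (simp add: simplex_cut_def mult_le_0_iff)
  qed
  then have "simplex_cut a b l s \<inter> simplex_cut b a (1 - l) s
      = ?S ` {x \<in> coord_simplex UNIV s. x$a = 0}"
    unfolding shear_image_coord_simplex[OF ne l, symmetric] by auto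
  also have "{x \<in> coord_simplex UNIV s. x$a = 0} = coord_simplex (UNIV - {a}) s"
    by (auto simp: coord_simplex_def)
  also have "?S ` coord_simplex (UNIV - {a}) s
      = (\<lambda>x. block_matrix a b 1 (1 / (1 - l)) l 0 (1 - l) *v x) ` coord_simplex (UNIV - {a}) s"
    by (intro image_cong) (auto simp: coord_simplex_def vec_eq_iff block_matrix_mult_vec[OF ne])
  finally show ?thesis .
qed


subsection \<open>Consequences of \<open>SL(n)\<close> covariance and the valuation property\<close>

locale SL_covariant_Linf_valuation =
  fixes Z :: "(real, 'n::{finite,wellorder}) vec set \<Rightarrow> (real, 'n) vec set"
  assumes convex_body: "P \<in> polytopes_o \<Longrightarrow> Z P \<in> convex_bodies_o"
    and valuation: "Linf_valuation Z"
    and covariant: "SL_covariant Z"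
begin

lemma support_SL_image:
  assumes "det A = 1" "P \<in> polytopes_o"
  shows "support_fun (Z ((\<lambda>x. A *v x) ` P)) u = support_fun (Z P) (transpose A *v u)"
  using covariant assms by (simp add: SL_covariant_def support_fun_matrix_image)

lemma support_block_matrix_image:
  assumes P: "P \<in> polytopes_o" and ab: "a \<noteq> b" "u$a = 0" "u$b = 0"
    and det: "det (block_matrix a b \<mu> \<alpha> \<beta> \<gamma> \<delta>) = 1" and "\<mu> \<ge> 0"
  shows "support_fun (Z ((\<lambda>x. block_matrix a b \<mu> \<alpha> \<beta> \<gamma> \<delta> *v x) ` P)) u = \<mu> * support_fun (Z P) u"
proof -
  have "Z P \<noteq> {}" "bounded (Z P)"
    using convex_body[OF P] by (auto simp: convex_bodies_o_def compact_imp_bounded)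
  then show ?thesis
    using support_SL_image[OF det P] transpose_block_matrix_mult_vec[OF ab]
      support_fun_scaleR \<open>\<mu> \<ge> 0\<close> by simp
qed

lemma support_Un_Int:
  assumes "K \<in> polytopes_o" "L \<in> polytopes_o" "K \<union> L \<in> polytopes_o" "K \<inter> L \<in> polytopes_o"
  shows "max (support_fun (Z (K \<union> L)) u) (support_fun (Z (K \<inter> L)) u)
    = max (support_fun (Z K) u) (support_fun (Z L) u)"
  using valuation assms unfolding Linf_valuation_def by blast

text \<open>On a polytope lying in the hyperplane \<open>x\<^sub>b = 0\<close> a dilation by \<open>s\<close> agrees with a map of
  determinant one that multiplies the \<open>b\<close>-th coordinate by \<open>s\<^bsup>1-n\<^esup>\<close>.\<close>

lemma support_scaleR_flat:
  assumes P: "P \<in> polytopes_o" "\<And>x. x \<in> P \<Longrightarrow> x$b = 0"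
    and ab: "a \<noteq> b" "u$a = 0" "u$b = 0" and s: "s > 0"
  shows "support_fun (Z ((\<lambda>x. s *\<^sub>R x) ` P)) u = s * support_fun (Z P) u"
proof -
  let ?M = "block_matrix a b s s 0 0 (1 / s ^ (CARD('n) - 1))"
  have "card {a, b} \<le> CARD('n)" by (rule card_mono) auto
  then have "CARD('n) - 1 = Suc (CARD('n) - 2)" using ab by simp
  then have "det ?M = 1"
    using det_block_matrix_triangular[OF ab(1), of 0 0 s s] s by simp
  moreover have "(\<lambda>x. s *\<^sub>R x) ` P = (\<lambda>x. ?M *v x) ` P"
    using P(2) by (intro image_cong) (auto simp: vec_eq_iff block_matrix_mult_vec[OF ab(1)])
  ultimately show ?thesis
    using support_block_matrix_image[OF P(1) ab] s by simp
qed

text \<open>\<open>coord_simplex (insert c R) s\<close> and its mirror image in \<open>x\<^sub>c = 0\<close> meet in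
  \<open>coord_simplex R s\<close>, and their union is the convex bipyramid.\<close>

lemma support_coord_simplex_insert_mono:
  assumes c: "c \<notin> R" and ac: "a \<noteq> c" "u$a = 0" "u$c = 0" and s: "s > 0"
  shows "support_fun (Z (coord_simplex R s)) u \<le> support_fun (Z (coord_simplex (insert c R) s)) u"
proof -
  let ?K = "coord_simplex (insert c R) s" and ?L = "reflected_simplex (insert c R) c s"
  obtain M where M: "?L = (\<lambda>x. M *v x) ` ?K" "support_fun (Z ?L) u = support_fun (Z ?K) u"
  proof (cases "a \<in> R")
    case True
    let ?B = "block_matrix a c 1 0 1 (-1) 0"
    have "?L = (\<lambda>x. ?B *v x) ` ?K"
      using True ac by (intro rotation_image_coord_simplex[symmetric]) auto
    moreover have "det ?B = 1" by (rule det_block_matrix_rotation[OF ac(1)])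
    moreover have "support_fun (Z ((\<lambda>x. ?B *v x) ` ?K)) u = 1 * support_fun (Z ?K) u"
      by (rule support_block_matrix_image[OF coord_simplex_polytopes_o[OF s] ac]) (simp_all add: calculation)
    ultimately show ?thesis by (intro that[of ?B]) auto
  next
    case False
    let ?B = "block_matrix a c 1 (-1) 0 0 (-1)"
    have "?L = (\<lambda>x. ?B *v x) ` ?K"
      using False ac by (intro reflection_image_coord_simplex[symmetric]) auto
    moreover have "det ?B = 1"
      using det_block_matrix_triangular[OF ac(1), of 0 0 1 "-1" "-1"] by simp
    moreover have "support_fun (Z ((\<lambda>x. ?B *v x) ` ?K)) u = 1 * support_fun (Z ?K) u"
      by (rule support_block_matrix_image[OF coord_simplex_polytopes_o[OF s] ac]) (simp_all add: calculation)
    ultimately show ?thesis by (intro that[of ?B]) auto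
  qed
  have K: "?K \<in> polytopes_o" and KL: "?K \<inter> ?L = coord_simplex R s"
    using coord_simplex_polytopes_o[OF s] coord_simplex_inter_reflected[OF c] by auto
  moreover have "?L \<in> polytopes_o"
    using polytopes_o_matrix_image[OF K] M(1) by simp
  moreover have "?K \<union> ?L \<in> polytopes_o"
    using K polytope_bipyramid[of "insert c R" c s]
    unfolding polytopes_o_def coord_simplex_union_reflected[symmetric] by auto
  ultimately have "max (support_fun (Z (?K \<union> ?L)) u) (support_fun (Z (?K \<inter> ?L)) u)
      = max (support_fun (Z ?K) u) (support_fun (Z ?L) u)"
    by (intro support_Un_Int) (simp_all add: coord_simplex_polytopes_o[OF s])
  then have "max (support_fun (Z (?K \<union> ?L)) u) (support_fun (Z (coord_simplex R s)) u)
      = support_fun (Z ?K) u"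
    unfolding KL M(2) by simp
  then show ?thesis by (metis max.cobounded2)
qed

lemma support_simplex_cut:
  assumes ab: "a \<noteq> b" "u$a = 0" "u$b = 0" and r: "0 < r" "r < s"
  shows "support_fun (Z (simplex_cut a b (1 - (r / s) ^ CARD('n)) s)) u
    = (s / r) * support_fun (Z (coord_simplex UNIV r)) u"
proof -
  define \<mu> where "\<mu> = s / r"
  define l where "l = 1 - (r / s) ^ CARD('n)"
  let ?S = "block_matrix a b 1 1 l 0 (1 - l)" and ?M = "block_matrix a b \<mu> \<mu> (\<mu> * l) 0 (\<mu> * (1 - l))"
  have \<mu>: "\<mu> > 0" "\<mu> * r = s" "\<mu> * (r / s) = 1" using r by (auto simp: \<mu>_def)
  have l: "0 \<le> l" "l < 1"
    using r by (auto simp: l_def power_le_one)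
  have "?M = \<mu> *\<^sub>R ?S" by (auto simp: vec_eq_iff block_matrix_def)
  then have "(\<lambda>x. ?M *v x) ` coord_simplex UNIV r = (\<lambda>x. ?S *v x) ` (\<lambda>x. \<mu> *\<^sub>R x) ` coord_simplex UNIV r"
    by (simp add: image_image matrix_scaleR_vector_ac)
  also have "\<dots> = (\<lambda>x. ?S *v x) ` coord_simplex UNIV s"
    unfolding coord_simplex_scaleR[OF \<mu>(1)] \<mu>(2) ..
  also have "\<dots> = simplex_cut a b l s"
    by (rule shear_image_coord_simplex[OF ab(1) l])
  finally have image: "(\<lambda>x. ?M *v x) ` coord_simplex UNIV r = simplex_cut a b l s" .
  have "card {a, b} \<le> CARD('n)" by (rule card_mono) auto
  then have n: "2 + (CARD('n) - 2) = CARD('n)" using ab by simp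
  have "det ?M = \<mu> ^ 2 * \<mu> ^ (CARD('n) - 2) * (1 - l)"
    using det_block_matrix_triangular[OF ab(1), of "\<mu> * l" 0 \<mu> \<mu> "\<mu> * (1 - l)"]
    by (simp add: power2_eq_square)
  also have "\<dots> = (\<mu> * (r / s)) ^ CARD('n)"
    unfolding l_def power_add[symmetric] n power_mult_distrib by simp
  also have "\<dots> = 1" unfolding \<mu>(3) by simp
  finally have det: "det ?M = 1" .
  have "support_fun (Z (simplex_cut a b l s)) u = \<mu> * support_fun (Z (coord_simplex UNIV r)) u"
    unfolding image[symmetric]
    using support_block_matrix_image[OF coord_simplex_polytopes_o[OF r(1)] ab det] \<mu>(1) by simp
  then show ?thesis by (simp only: l_def \<mu>_def)
qed


lemma support_coord_simplex_UNIV_eq_max: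
  assumes ab: "a \<noteq> b" "u$a = 0" "u$b = 0" and l: "0 < l" "l < 1" and s: "s > 0"
  shows "support_fun (Z (coord_simplex UNIV s)) u
    = max (support_fun (Z (simplex_cut b a l s)) u) (support_fun (Z (simplex_cut a b (1 - l) s)) u)"
proof -
  let ?A = "simplex_cut b a l s" and ?B = "simplex_cut a b (1 - l) s"
  let ?M = "block_matrix b a 1 (1 / (1 - l)) l 0 (1 - l)"
  have ba: "b \<noteq> a" "u$b = 0" "u$a = 0" using ab by auto
  have full: "coord_simplex UNIV s \<in> polytopes_o"
    and face: "coord_simplex (UNIV - {b}) s \<in> polytopes_o"
    using coord_simplex_polytopes_o[OF s] by auto
  have I: "?A \<inter> ?B = (\<lambda>x. ?M *v x) ` coord_simplex (UNIV - {b}) s"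
    using simplex_cut_inter[OF ba(1)] l by simp
  have "?A \<in> polytopes_o"
    using polytopes_o_matrix_image[OF full, of "block_matrix b a 1 1 l 0 (1 - l)"]
      shear_image_coord_simplex[OF ba(1), of l s] l by simp
  moreover have "?B \<in> polytopes_o"
    using polytopes_o_matrix_image[OF full, of "block_matrix a b 1 1 (1 - l) 0 (1 - (1 - l))"]
      shear_image_coord_simplex[OF ab(1), of "1 - l" s] l by simp
  moreover have "?A \<union> ?B \<in> polytopes_o"
    using full simplex_cut_union[of b a l s] by simp
  moreover have "?A \<inter> ?B \<in> polytopes_o"
    unfolding I by (rule polytopes_o_matrix_image[OF face])
  ultimately have "max (support_fun (Z (?A \<union> ?B)) u) (support_fun (Z (?A \<inter> ?B)) u)
      = max (support_fun (Z ?A) u) (support_fun (Z ?B) u)"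
    by (rule support_Un_Int)
  moreover have "det ?M = 1"
    using det_block_matrix_triangular[OF ba(1), of l 0 1 "1 / (1 - l)" "1 - l"] l by simp
  ultimately have "max (support_fun (Z (coord_simplex UNIV s)) u)
        (support_fun (Z (coord_simplex (UNIV - {b}) s)) u)
      = max (support_fun (Z ?A) u) (support_fun (Z ?B) u)"
    unfolding I simplex_cut_union using support_block_matrix_image[OF face ba] by simp
  moreover have "support_fun (Z (coord_simplex (UNIV - {b}) s)) u \<le> support_fun (Z (coord_simplex UNIV s)) u"
    using support_coord_simplex_insert_mono[of b "UNIV - {b}" a u s] ab s by (simp add: insert_absorb)
  ultimately show ?thesis by (simp add: max_def split: if_splits)
qed

lemma support_coord_simplex_UNIV_superlinear:
  assumes ab: "a \<noteq> b" "u$a = 0" "u$b = 0" and r: "0 < r" "r < s"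
  shows "(s / r) * support_fun (Z (coord_simplex UNIV r)) u \<le> support_fun (Z (coord_simplex UNIV s)) u"
proof -
  have "0 < (r / s) ^ CARD('n)" "(r / s) ^ CARD('n) < 1"
    using r by (simp_all add: power_less_one_iff)
  then have "support_fun (Z (simplex_cut b a (1 - (r / s) ^ CARD('n)) s)) u
      \<le> support_fun (Z (coord_simplex UNIV s)) u"
    using support_coord_simplex_UNIV_eq_max[OF ab, of "1 - (r / s) ^ CARD('n)" s] r by simp
  then show ?thesis
    using support_simplex_cut[of b a u r s] ab r by simp
qed

lemma support_coord_simplex_UNIV_halving:
  assumes ab: "a \<noteq> b" "u$a = 0" "u$b = 0" and r: "0 < r" "r < s" and half: "(r / s) ^ CARD('n) = 1 / 2"
  shows "support_fun (Z (coord_simplex UNIV s)) u = (s / r) * support_fun (Z (coord_simplex UNIV r)) u"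
  using support_coord_simplex_UNIV_eq_max[OF ab, of "1 / 2" s] support_simplex_cut[OF ab r]
    support_simplex_cut[of b a u r s] ab r half by simp

text \<open>Superlinearity makes \<open>s \<mapsto> h(Z(s T\<^sup>n), u) / s\<close> nondecreasing, and the halving identity
  makes it invariant under the dilation by \<open>2\<^bsup>-1/n\<^esup>\<close>; hence it is constant.\<close>

lemma support_coord_simplex_UNIV_scaleR:
  assumes ab: "a \<noteq> b" "u$a = 0" "u$b = 0" and s: "s > 0"
  shows "support_fun (Z (coord_simplex UNIV s)) u = s * support_fun (Z (coord_simplex UNIV 1)) u"
proof -
  define h where "h t = support_fun (Z (coord_simplex UNIV t)) u" for t
  define q where "q = root CARD('n) (1 / 2)"
  have q: "0 < q" "q < 1" "q ^ CARD('n) = 1 / 2"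
    by (simp_all add: q_def real_root_lt_1_iff real_root_pow_pos)
  have mono: "h r / r \<le> h t / t" if "0 < r" "r < t" for r t
  proof -
    have "(t / r) * h r \<le> h t"
      unfolding h_def by (rule support_coord_simplex_UNIV_superlinear[OF ab that])
    then show ?thesis using that by (simp add: field_simps)
  qed
  have dilation: "h (t * q) / (t * q) = h t / t" if "0 < t" for t
  proof -
    have "h t = (t / (t * q)) * h (t * q)"
      unfolding h_def using that q
      by (intro support_coord_simplex_UNIV_halving[OF ab]) (simp_all add: power_mult_distrib)
    then show ?thesis using that q by (simp add: field_simps)
  qed
  have "h s / s = h 1 / 1"
    using mono_dilation_invariant_const[of q "\<lambda>t. h t / t", OF q(1,2) mono dilation s, of 1] by simp
  then show ?thesis using s by (simp add: h_def field_simps)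
qed

lemma support_simplex_T_scaleR:
  assumes n: "CARD('n) \<ge> 3" and d: "d \<le> CARD('n)" and s: "s > 0"
    and u: "\<And>i. i \<noteq> coord_index 1 \<Longrightarrow> u$i = 0"
  shows "support_fun (Z ((\<lambda>x. s *\<^sub>R x) ` simplex_T d)) u = s * support_fun (Z (simplex_T d)) u"
proof -
  let ?a = "coord_index 2 :: 'n" and ?b = "coord_index CARD('n) :: 'n"
  have ab: "?a \<noteq> ?b" "u$?a = 0" "u$?b = 0"
    using n u coord_index_eq_iff[where 'n='n, of 2 "CARD('n)"] coord_index_eq_iff[where 'n='n, of 2 1]
      coord_index_eq_iff[where 'n='n, of "CARD('n)" 1] by auto
  show ?thesis
  proof (cases "d = CARD('n)")
    case True
    have "(simplex_T d :: (real, 'n) vec set) = coord_simplex UNIV 1"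
      unfolding True simplex_T_eq_coord_simplex first_coords_CARD ..
    then show ?thesis
      using coord_simplex_scaleR[OF s, of "UNIV :: 'n set" 1] support_coord_simplex_UNIV_scaleR[OF ab s] by simp
  next
    case False
    then have "?b \<notin> first_coords d"
      using coord_index_in_first_coords_iff[where 'n='n, of "CARD('n)" d] n d by simp
    then have "x$?b = 0" if "x \<in> simplex_T d" for x
      using that by (simp add: simplex_T_eq_coord_simplex coord_simplex_def)
    moreover have "simplex_T d \<in> polytopes_o"
      by (simp add: simplex_T_eq_coord_simplex coord_simplex_polytopes_o)
    ultimately show ?thesis by (intro support_scaleR_flat[OF _ _ ab s])
  qed
qed

lemma support_simplex_T_mono:
  assumes n: "CARD('n) \<ge> 3" and d: "1 \<le> d" "d < CARD('n)"
    and u: "\<And>i. i \<noteq> coord_index 1 \<Longrightarrow> u$i = 0"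
  shows "support_fun (Z (simplex_T d)) u \<le> support_fun (Z (simplex_T (Suc d))) u"
proof -
  let ?c = "coord_index (Suc d) :: 'n" and ?a = "coord_index (if d = 1 then 3 else 2) :: 'n"
  have "?c \<notin> first_coords d"
    using coord_index_in_first_coords_iff[where 'n='n, of "Suc d" d] d by simp
  moreover have "?a \<noteq> ?c" "u$?a = 0" "u$?c = 0"
    using n d u coord_index_eq_iff[where 'n='n, of "if d = 1 then 3 else 2" "Suc d"]
      coord_index_eq_iff[where 'n='n, of "if d = 1 then 3 else 2" 1]
      coord_index_eq_iff[where 'n='n, of "Suc d" 1] by auto
  ultimately show ?thesis
    using support_coord_simplex_insert_mono[of ?c "first_coords d" ?a u 1]
    by (simp add: simplex_T_eq_coord_simplex first_coords_Suc)
qed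

end

theorem lemma4p2:
  fixes Z :: "(real, 'n::{finite,wellorder}) vec set \<Rightarrow> (real, 'n) vec set"
  assumes "CARD('n) \<ge> 3"
    and "\<forall>P \<in> polytopes_o. Z P \<in> convex_bodies_o"
    and "Linf_valuation Z"
    and "SL_covariant Z"
  shows "(\<forall>d s. 1 \<le> d \<and> d \<le> CARD('n) \<and> s > 0 \<longrightarrow>
            support_fun (Z ((\<lambda>x. s *\<^sub>R x) ` simplex_T d)) (std_basis 1)
              = s * support_fun (Z (simplex_T d)) (std_basis 1)
          \<and> support_fun (Z ((\<lambda>x. s *\<^sub>R x) ` simplex_T d)) (- std_basis 1)
              = s * support_fun (Z (simplex_T d)) (- std_basis 1))
       \<and> (\<forall>d. 1 \<le> d \<and> d < CARD('n) \<longrightarrow>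
            support_fun (Z (simplex_T d)) (std_basis 1)
              \<le> support_fun (Z (simplex_T (Suc d))) (std_basis 1)
          \<and> support_fun (Z (simplex_T d)) (- std_basis 1)
              \<le> support_fun (Z (simplex_T (Suc d))) (- std_basis 1))"
proof -
  interpret SL_covariant_Linf_valuation Z
    using assms(2-4) by unfold_locales auto
  have "i \<noteq> coord_index 1 \<Longrightarrow> (std_basis 1 :: (real, 'n) vec) $ i = 0"
    and "i \<noteq> coord_index 1 \<Longrightarrow> (- std_basis 1 :: (real, 'n) vec) $ i = 0" for i
    by (simp_all add: std_basis_eq_axis axis_def)
  then show ?thesis
    using support_simplex_T_scaleR[OF assms(1)] support_simplex_T_mono[OF assms(1)] by blast
qed

end
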